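(* Let $a\geq 1$ and $b\geq 3$ be integers. Then the map $S_{a,b}:B\to B$ is not ergodic with respect to Lebesgue measure.
   Context: Let $\Lambda^n=\{x\in\mathbb{R}^n : 0\leq x_1\leq\cdots\leq x_n\}$. For integers $a,b\geq 1$ let $T_{a,b}:\Lambda^{a+b}\to\Lambda^{a+b}$ send $x$ to the vector obtained by arranging $x_1,\ldots,x_a,\,x_{a+1}-x_a,\ldots,x_{a+b}-x_a$ in nondecreasing order. Let $B=\{x\in\Lambda^{a+b-1} : x_{a+b-1}\leq 1\}$ and $p:\Lambda^{a+b}\to B$, $p(x)=(x_1/x_{a+b},\ldots,x_{a+b-1}/x_{a+b})$ (for $x_{a+b}>0$). The map $S_{a,b}:B\to B$ is defined (Lebesgue-a.e.) by $S_{a,b}\circ p=p\circ T_{a,b}$, i.e. $S_{a,b}(z)=p(T_{a,b}(z_1,\ldots,z_{a+b-1},1))$; this is well defined since $T_{a,b}$ is positively homogeneous of degree one. Ergodic means: every measurable $E\subset B$ with $S_{a,b}^{-1}(E)=E$ has zero or full Lebesgue measure. *)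

theory Defs
  imports "HOL-Analysis.Analysis"
begin

text \<open>Points of R^n are represented as functions nat => real restricted to the
index set {..<n} (0-based: coordinate x_i of the paper is x (i-1)), i.e. elements
of PiE {..<n} (\<lambda>_. UNIV), the space of the product measure.\<close>

definition Lam :: "nat \<Rightarrow> (nat \<Rightarrow> real) set" where
  "Lam n = {x \<in> PiE {..<n} (\<lambda>_. UNIV).
      (0 < n \<longrightarrow> 0 \<le> x 0) \<and> (\<forall>i. Suc i < n \<longrightarrow> x i \<le> x (Suc i))}"

definition T_map :: "nat \<Rightarrow> nat \<Rightarrow> (nat \<Rightarrow> real) \<Rightarrow> (nat \<Rightarrow> real)" where
  "T_map a b x = (let l = sort (map x [0..<a] @ map (\<lambda>i. x i - x (a - 1)) [a..<a+b])
                  in restrict (\<lambda>i. l ! i) {..<a+b})"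

definition B_set :: "nat \<Rightarrow> nat \<Rightarrow> (nat \<Rightarrow> real) set" where
  "B_set a b = {x \<in> Lam (a + b - 1). x (a + b - 2) \<le> 1}"

definition p_map :: "nat \<Rightarrow> (nat \<Rightarrow> real) \<Rightarrow> (nat \<Rightarrow> real)" where
  "p_map m x = restrict (\<lambda>i. x i / x (m - 1)) {..<m - 1}"

definition S_map :: "nat \<Rightarrow> nat \<Rightarrow> (nat \<Rightarrow> real) \<Rightarrow> (nat \<Rightarrow> real)" where
  "S_map a b z = p_map (a + b)
     (T_map a b (\<lambda>i. if i < a + b - 1 then z i else if i = a + b - 1 then 1 else undefined))"

definition lebesgue_n :: "nat \<Rightarrow> (nat \<Rightarrow> real) measure" where
  "lebesgue_n n = completion (Pi\<^sub>M {..<n} (\<lambda>_. lborel))"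

definition ergodic_map :: "'a measure \<Rightarrow> 'a set \<Rightarrow> ('a \<Rightarrow> 'a) \<Rightarrow> bool" where
  "ergodic_map M B S \<longleftrightarrow>
     (\<forall>E \<in> sets M. E \<subseteq> B \<longrightarrow> {z \<in> B. S z \<in> E} = E \<longrightarrow>
        emeasure M E = 0 \<or> emeasure M (B - E) = 0)"

end

theory Submission
  imports Defs
begin

text \<open>Write q = z_a, t = z_(a+b-1) (the last coordinate), s for the coordinate sum and
  \<beta> = b - 1. On the region D of B where s < 1 and s < 2t, the entry t - q of T dominates all
  entries except 1 - q, so S acts on D by an explicit formula: sort the first a+b-2 entries, keep
  t - q last and divide everything by 1 - q. Consequently S maps D into itself and rescales both
  \<beta> - s and \<beta> t - s by 1/(1 - q), so the sign of (\<beta> - s) - 4(\<beta> t - s) is preserved along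
  orbits in D. Its two sign regions are disjoint forward-invariant sets, each containing a box of
  positive measure. The points of B whose orbit enters the first region before leaving B form an
  invariant set that contains the first region and misses the second.\<close>

lemma nth_insort:
  fixes x :: "'a::linorder"
  assumes "sorted ys" "i \<le> length ys"
  shows "insort x ys ! i =
    (if i = 0 then (if ys = [] then x else min x (ys ! 0))
     else if i = length ys then max (ys ! (i - 1)) x
     else max (ys ! (i - 1)) (min x (ys ! i)))"
  using assms
proof (induction ys arbitrary: i)
  case (Cons y ys)
  show ?case
  proof (cases "x \<le> y")
    case True
    have "x \<le> (y # ys) ! j" if "j \<le> length ys" for j
      using True Cons.prems(1) that by (cases j) (auto simp: order_trans)
    then show ?thesis
    proof (cases i)
      case (Suc j)
      then show ?thesis
        using True Cons.prems(2) \<open>\<And>j. j \<le> length ys \<Longrightarrow> x \<le> (y # ys) ! j\<close>[of j]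
          \<open>\<And>j. j \<le> length ys \<Longrightarrow> x \<le> (y # ys) ! j\<close>[of "Suc j"]
        by (auto simp: max_absorb1 min_absorb1)
    qed (use True in simp)
  next
    case False
    show ?thesis
    proof (cases i)
      case (Suc j)
      have y_le: "y \<le> ys ! 0" if "ys \<noteq> []"
        using Cons.prems(1) that by (cases ys) auto
      have IH: "insort x ys ! j = (if j = 0 then (if ys = [] then x else min x (ys ! 0))
          else if j = length ys then max (ys ! (j - 1)) x
          else max (ys ! (j - 1)) (min x (ys ! j)))"
        using Cons Suc by simp
      show ?thesis
      proof (cases j)
        case 0
        then show ?thesis using False Suc IH y_le by (auto simp: max_def min_def)
      next
        case (Suc k)
        then show ?thesis using False \<open>i = Suc j\<close> IH by (auto simp: nth_Cons')
      qed
    qed (use False in simp)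
  qed
qed simp

lemma borel_measurable_sort_nth:
  fixes fs :: "('a \<Rightarrow> real) list"
  assumes "\<forall>f\<in>set fs. f \<in> borel_measurable M" "i < length fs"
  shows "(\<lambda>z. sort (map (\<lambda>f. f z) fs) ! i) \<in> borel_measurable M"
  using assms
proof (induction fs arbitrary: i)
  case (Cons f fs)
  let ?s = "\<lambda>z. sort (map (\<lambda>g. g z) fs)"
  have f: "f \<in> borel_measurable M"
    and IH: "\<And>j. j < length fs \<Longrightarrow> (\<lambda>z. ?s z ! j) \<in> borel_measurable M"
    using Cons by simp_all
  have "?s z = [] \<longleftrightarrow> fs = []" for z
    by (metis length_map length_sort length_0_conv)
  then have eq: "(\<lambda>z. sort (map (\<lambda>g. g z) (f # fs)) ! i) = (\<lambda>z.
      if i = 0 then (if fs = [] then f z else min (f z) (?s z ! 0))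
      else if i = length fs then max (?s z ! (i - 1)) (f z)
      else max (?s z ! (i - 1)) (min (f z) (?s z ! i)))"
    using Cons.prems(2) by (intro ext) (simp add: nth_insort)
  consider "i = 0" "fs = []" | "i = 0" "fs \<noteq> []" | "i \<noteq> 0" "i = length fs"
    | "i \<noteq> 0" "i \<noteq> length fs" by blast
  then show ?case
    unfolding eq using Cons.prems(2) f IH
    by cases (simp_all add: borel_measurable_max borel_measurable_min)
qed simp

lemma sum_list_sort_eq: "sum_list (sort xs) = sum_list (xs :: 'a::{linorder, comm_monoid_add} list)"
  by (metis mset_sort sum_mset_sum_list)

lemma ergodic_map_completionD:
  assumes "B \<in> sets M" "ergodic_map (completion M) B S"
  shows "ergodic_map M B S"
  unfolding ergodic_map_def
proof (intro ballI impI)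
  have completion_eq: "emeasure (completion M) X = emeasure M X" if "X \<in> sets M" for X
    using that by (simp add: emeasure_completion main_part_sets)
  fix E assume E: "E \<in> sets M" "E \<subseteq> B" "{z \<in> B. S z \<in> E} = E"
  then have "emeasure (completion M) E = 0 \<or> emeasure (completion M) (B - E) = 0"
    using assms(2) sets_completionI_sets[OF E(1)] unfolding ergodic_map_def by blast
  moreover have "B - E \<in> sets M" using E(1) assms(1) by auto
  ultimately show "emeasure M E = 0 \<or> emeasure M (B - E) = 0"
    using completion_eq E(1) by simp
qed

definition reach_within :: "('a \<Rightarrow> 'a) \<Rightarrow> 'a set \<Rightarrow> 'a set \<Rightarrow> 'a set" where
  "reach_within S B A = {z. \<exists>k. (\<forall>j\<le>k. (S ^^ j) z \<in> B) \<and> (S ^^ k) z \<in> A}"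

lemma reach_within_iff:
  "z \<in> reach_within S B A \<longleftrightarrow> z \<in> B \<and> (z \<in> A \<or> S z \<in> reach_within S B A)"
proof
  assume "z \<in> reach_within S B A"
  then obtain k where k: "\<forall>j\<le>k. (S ^^ j) z \<in> B" "(S ^^ k) z \<in> A"
    unfolding reach_within_def by blast
  show "z \<in> B \<and> (z \<in> A \<or> S z \<in> reach_within S B A)"
  proof (cases k)
    case (Suc k')
    have "(S ^^ j) (S z) \<in> B" if "j \<le> k'" for j
      using k(1)[rule_format, of "Suc j"] that Suc by (simp add: funpow_swap1)
    moreover have "(S ^^ k') (S z) \<in> A"
      using k(2) Suc by (simp add: funpow_swap1)
    ultimately have "S z \<in> reach_within S B A"
      unfolding reach_within_def by blast
    then show ?thesis using k(1)[rule_format, of 0] by simp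
  qed (use k in simp)
next
  assume z: "z \<in> B \<and> (z \<in> A \<or> S z \<in> reach_within S B A)"
  show "z \<in> reach_within S B A"
  proof (cases "z \<in> A")
    case True
    then show ?thesis using z unfolding reach_within_def by (intro CollectI exI[of _ 0]) simp
  next
    case False
    then obtain k where k: "\<forall>j\<le>k. (S ^^ j) (S z) \<in> B" "(S ^^ k) (S z) \<in> A"
      using z unfolding reach_within_def by blast
    have "(S ^^ j) z \<in> B" if "j \<le> Suc k" for j
      using z k(1) that by (cases j) (simp_all add: funpow_swap1)
    moreover have "(S ^^ Suc k) z \<in> A"
      using k(2) by (simp add: funpow_swap1)
    ultimately show ?thesis unfolding reach_within_def by blast
  qed
qed

lemma reach_within_subset: "reach_within S B A \<subseteq> B"
proof
  fix z assume "z \<in> reach_within S B A"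
  then show "z \<in> B" using reach_within_iff[of z S B A] by blast
qed

lemma subset_reach_within:
  assumes "A \<subseteq> B" shows "A \<subseteq> reach_within S B A"
proof
  fix z assume "z \<in> A"
  then show "z \<in> reach_within S B A" using assms reach_within_iff[of z S B A] by blast
qed

lemma reach_within_invariant:
  assumes "A \<subseteq> B" "S ` A \<subseteq> A"
  shows "{z \<in> B. S z \<in> reach_within S B A} = reach_within S B A"
proof
  show "{z \<in> B. S z \<in> reach_within S B A} \<subseteq> reach_within S B A"
  proof
    fix z assume "z \<in> {z \<in> B. S z \<in> reach_within S B A}"
    then show "z \<in> reach_within S B A" using reach_within_iff[of z S B A] by blast
  qed
  show "reach_within S B A \<subseteq> {z \<in> B. S z \<in> reach_within S B A}"
  proof
    fix z assume "z \<in> reach_within S B A"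
    then have "z \<in> B" "z \<in> A \<or> S z \<in> reach_within S B A"
      using reach_within_iff[of z S B A] by blast+
    then show "z \<in> {z \<in> B. S z \<in> reach_within S B A}"
      using assms subset_reach_within[OF assms(1)] by blast
  qed
qed

lemma reach_within_disjoint:
  assumes "S ` C \<subseteq> C" "C \<inter> A = {}"
  shows "C \<inter> reach_within S B A = {}"
proof -
  have "(S ^^ k) z \<in> C" if "z \<in> C" for k z
    using that assms(1) by (induction k) auto
  then show ?thesis using assms(2) unfolding reach_within_def by blast
qed

lemma sets_reach_within:
  assumes S: "S \<in> M \<rightarrow>\<^sub>M M" and "B \<in> sets M" "A \<in> sets M"
  shows "reach_within S B A \<in> sets M"
proof -
  have "reach_within S B A =
      (\<Union>k. {z \<in> space M. (\<forall>j\<in>{..k}. (S ^^ j) z \<in> B) \<and> (S ^^ k) z \<in> A})"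
    using reach_within_subset[of S B A] sets.sets_into_space[OF \<open>B \<in> sets M\<close>]
    unfolding reach_within_def by auto
  also have "\<dots> \<in> sets M"
    using measurable_compose_n[OF S] assms(2,3)
    by (intro sets.countable_UN sets.sets_Collect_conj sets.sets_Collect_finite_All
        measurable_sets_Collect) auto
  finally show ?thesis .
qed

lemma not_ergodic_map_if_disjoint_forward_invariant:
  assumes S: "S \<in> M \<rightarrow>\<^sub>M M" and B: "B \<in> sets M"
    and A: "A \<in> sets M" "A \<subseteq> B" "S ` A \<subseteq> A" "emeasure M A \<noteq> 0"
    and C: "C \<subseteq> B" "S ` C \<subseteq> C" "emeasure M C \<noteq> 0"
    and disjoint: "C \<inter> A = {}"
  shows "\<not> ergodic_map M B S"
proof
  assume ergodic: "ergodic_map M B S"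
  define E where "E = reach_within S B A"
  have E: "E \<in> sets M" "E \<subseteq> B" "{z \<in> B. S z \<in> E} = E"
    unfolding E_def using sets_reach_within[OF S B A(1)] reach_within_subset
      reach_within_invariant[OF A(2,3)] by auto
  have "emeasure M A \<le> emeasure M E"
    using subset_reach_within[OF A(2)] E(1) unfolding E_def by (rule emeasure_mono)
  moreover have "emeasure M C \<le> emeasure M (B - E)"
    using reach_within_disjoint[OF C(2) disjoint] C(1) B E(1)
    unfolding E_def by (intro emeasure_mono) auto
  ultimately show False
    using ergodic E A(4) C(3) unfolding ergodic_map_def by (metis le_zero_eq)
qed

definition with_last_one :: "nat \<Rightarrow> (nat \<Rightarrow> real) \<Rightarrow> nat \<Rightarrow> real" where
  "with_last_one m z = (\<lambda>i. if i < m then z i else if i = m then 1 else undefined)"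

lemma S_map_eq: "S_map a b z = p_map (a + b) (T_map a b (with_last_one (a + b - 1) z))"
  unfolding S_map_def with_last_one_def ..

lemma borel_measurable_component:
  "(\<lambda>x. x i) \<in> borel_measurable (Pi\<^sub>M I (\<lambda>_. (lborel :: real measure)))"
proof (cases "i \<in> I")
  case True
  then show ?thesis using measurable_component_singleton[of i I] by simp
next
  case False
  then have "x i = undefined" if "x \<in> space (Pi\<^sub>M I (\<lambda>_. (lborel :: real measure)))" for x
    using that by (auto simp: space_PiM PiE_def extensional_def)
  then show ?thesis by (subst measurable_cong[where g = "\<lambda>_. undefined"]) auto
qed

lemma measurable_S_map:
  "S_map a b \<in> Pi\<^sub>M {..<a+b-1} (\<lambda>_. lborel) \<rightarrow>\<^sub>M Pi\<^sub>M {..<a+b-1} (\<lambda>_. lborel)"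
proof -
  let ?P = "Pi\<^sub>M {..<a+b-1} (\<lambda>_. lborel :: real measure)"
  let ?x = "with_last_one (a + b - 1)"
  have x: "(\<lambda>z. ?x z i) \<in> borel_measurable ?P" for i
    unfolding with_last_one_def
    by (cases "i < a + b - 1"; cases "i = a + b - 1") (auto intro: borel_measurable_component)
  have T: "(\<lambda>z. T_map a b (?x z) j) \<in> borel_measurable ?P" if "j < a + b" for j
  proof -
    define fs where "fs = map (\<lambda>i z. ?x z i) [0..<a] @ map (\<lambda>i z. ?x z i - ?x z (a - 1)) [a..<a+b]"
    have "(\<lambda>z. T_map a b (?x z) j) = (\<lambda>z. sort (map (\<lambda>f. f z) fs) ! j)"
      using that unfolding T_map_def fs_def by (simp add: Let_def o_def)
    moreover have "\<forall>f\<in>set fs. f \<in> borel_measurable ?P"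
      unfolding fs_def using x by auto
    ultimately show ?thesis
      using that borel_measurable_sort_nth[of fs ?P j] unfolding fs_def by simp
  qed
  show ?thesis
    unfolding S_map_eq[abs_def] p_map_def
  proof (rule measurable_restrict)
    fix i assume "i \<in> {..<a+b-1}"
    then show "(\<lambda>z. T_map a b (?x z) i / T_map a b (?x z) (a + b - 1)) \<in> ?P \<rightarrow>\<^sub>M lborel"
      unfolding measurable_lborel1 by (intro borel_measurable_divide T) auto
  qed
qed

lemma sets_B_set: "B_set a b \<in> sets (Pi\<^sub>M {..<a+b-1} (\<lambda>_. lborel))"
proof -
  have "B_set a b = {x \<in> space (Pi\<^sub>M {..<a+b-1} (\<lambda>_. lborel)).
     (0 < a+b-1 \<longrightarrow> 0 \<le> x 0) \<and> (\<forall>i\<in>{..<a+b-2}. x i \<le> x (Suc i)) \<and> x (a+b-2) \<le> 1}"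
    unfolding B_set_def Lam_def by (auto simp: space_PiM less_diff_conv)
  also have "\<dots> \<in> sets (Pi\<^sub>M {..<a+b-1} (\<lambda>_. lborel))"
    by (intro sets.sets_Collect_conj sets.sets_Collect_imp sets.sets_Collect_const
        sets.sets_Collect_finite_All borel_measurable_le borel_measurable_component
        borel_measurable_const finite_lessThan)
  finally show ?thesis .
qed

lemma Lam_mono:
  assumes "x \<in> Lam n" "i \<le> j" "j < n"
  shows "x i \<le> x j"
  using assms(2,3)
proof (induction j)
  case (Suc j)
  then have "x j \<le> x (Suc j)" using assms(1) unfolding Lam_def by auto
  then show ?case using Suc by (cases "i = Suc j") auto
qed simp

lemma Lam_nonneg:
  assumes "x \<in> Lam n" "i < n"
  shows "0 \<le> x i"
  using assms Lam_mono[OF assms(1), of 0 i] unfolding Lam_def by auto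

definition head_entries :: "nat \<Rightarrow> nat \<Rightarrow> (nat \<Rightarrow> real) \<Rightarrow> real list" where
  "head_entries a b z = map z [0..<a] @ map (\<lambda>i. z i - z (a - 1)) [a..<a+b-2]"

lemma head_entries_bounds:
  assumes "a \<ge> 1" "b \<ge> 2" "z \<in> B_set a b" "2 * z (a - 1) \<le> z (a+b-2)"
    and "w \<in> set (head_entries a b z)"
  shows "0 \<le> w" "w \<le> z (a+b-2) - z (a - 1)"
proof -
  have zLam: "z \<in> Lam (a + b - 1)" using assms(3) unfolding B_set_def by simp
  have mono: "z i \<le> z j" if "i \<le> j" "j \<le> a+b-2" for i j
    using Lam_mono[OF zLam that(1)] that(2) assms(1,2) by simp
  have nonneg: "0 \<le> z i" if "i \<le> a+b-2" for i
    using Lam_nonneg[OF zLam] that assms(1,2) by simp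
  from assms(5) consider (low) i where "i < a" "w = z i"
    | (high) i where "a \<le> i" "i < a+b-2" "w = z i - z (a - 1)"
    unfolding head_entries_def by auto
  then have "0 \<le> w \<and> w \<le> z (a+b-2) - z (a - 1)"
  proof cases
    case low
    then have "0 \<le> z i" "z i \<le> z (a - 1)" using mono nonneg assms(1,2) by auto
    then show ?thesis using low assms(4) by linarith
  next
    case high
    then have "z (a - 1) \<le> z i" "z i \<le> z (a+b-2)" using mono by auto
    then show ?thesis using high by linarith
  qed
  then show "0 \<le> w" "w \<le> z (a+b-2) - z (a - 1)" by simp_all
qed

lemma S_map_explicit:
  fixes a b :: nat and z :: "nat \<Rightarrow> real"
  defines "q \<equiv> z (a - 1)"
  defines "ys \<equiv> sort (head_entries a b z) @ [z (a+b-2) - q]"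
  assumes ab: "a \<ge> 1" "b \<ge> 2" and z: "z \<in> B_set a b" and q: "2 * q \<le> z (a+b-2)"
  shows "S_map a b z = restrict (\<lambda>i. ys ! i / (1 - q)) {..<a+b-1}"
proof -
  define K where "K = a + b - 2"
  define x where "x = with_last_one (a + b - 1) z"
  have K: "a + b - 1 = Suc K" "a \<le> K" "a + b = Suc (Suc K)" using ab unfolding K_def by auto
  have zK: "z K \<le> 1" using z unfolding B_set_def K_def by auto
  have upt: "[a..<a+b] = [a..<K] @ [K, Suc K]"
    using K by (simp add: upt_add_eq_append[of a K] numeral_2_eq_2)
  have list: "map x [0..<a] @ map (\<lambda>i. x i - x (a - 1)) [a..<a+b]
      = head_entries a b z @ [z K - q, 1 - q]"
    using K unfolding upt head_entries_def K_def[symmetric] x_def with_last_one_def q_def by auto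
  have "w \<le> z K - q" "w \<le> 1 - q" if "w \<in> set (head_entries a b z)" for w
    using head_entries_bounds(2)[OF ab z _ that] q zK unfolding q_def K_def by auto
  then have "sort (head_entries a b z @ [z K - q, 1 - q]) = ys @ [1 - q]"
    using zK unfolding ys_def K_def[symmetric] by (subst sort_append) auto
  then have T: "T_map a b x = restrict ((!) (ys @ [1 - q])) {..<a+b}"
    unfolding T_map_def Let_def list by simp
  have "length ys = Suc K" unfolding ys_def head_entries_def K_def[symmetric] using K by simp
  then show ?thesis
    unfolding S_map_eq p_map_def x_def[symmetric] T using K by (auto simp: nth_append)
qed

definition coord_sum :: "nat \<Rightarrow> (nat \<Rightarrow> real) \<Rightarrow> real" where
  "coord_sum n z = (\<Sum>i<n. z i)"

lemma S_map_rescaled: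
  fixes a b :: nat and z :: "nat \<Rightarrow> real"
  defines "q \<equiv> z (a - 1)"
  assumes ab: "a \<ge> 1" "b \<ge> 2" and z: "z \<in> B_set a b" and q: "2 * q \<le> z (a+b-2)"
  shows "S_map a b z \<in> B_set a b"
    and "coord_sum (a+b-1) (S_map a b z) = (coord_sum (a+b-1) z - (real b - 1) * q) / (1 - q)"
    and "S_map a b z (a+b-2) = (z (a+b-2) - q) / (1 - q)"
proof -
  define K where "K = a + b - 2"
  define ys where "ys = sort (head_entries a b z) @ [z K - q]"
  have K: "a + b - 1 = Suc K" "a \<le> K" "K - a = b - 2" using ab unfolding K_def by auto
  have S: "S_map a b z = restrict (\<lambda>i. ys ! i / (1 - q)) {..<Suc K}"
    using S_map_explicit[OF ab z q[unfolded q_def]] unfolding ys_def K_def q_def K(1)[unfolded K_def] .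
  have len: "length ys = Suc K" unfolding ys_def head_entries_def using K by simp
  have bounds: "0 \<le> w" "w \<le> z K - q" if "w \<in> set (head_entries a b z)" for w
    using head_entries_bounds[OF ab z _ that] q unfolding q_def K_def by auto
  have "0 \<le> q" unfolding q_def using Lam_nonneg[of z "a + b - 1" "a - 1"] z ab
    unfolding B_set_def by simp
  moreover have "z K \<le> 1" using z unfolding B_set_def K_def by simp
  ultimately have q1: "0 \<le> q" "q < 1" "z K - q \<le> 1 - q" using q unfolding K_def by auto
  have sorted: "sorted ys" unfolding ys_def using bounds by (auto simp: sorted_append)
  have nonneg: "0 \<le> w" if "w \<in> set ys" for w
    using that bounds q q1 unfolding ys_def K_def by auto
  show "S_map a b z (a+b-2) = (z (a+b-2) - q) / (1 - q)"
    unfolding S using len by (simp add: ys_def nth_append K_def)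
  have "sum_list ys = (\<Sum>i<a. z i) + (\<Sum>i=a..<K. z i - q) + (z K - q)"
    unfolding ys_def head_entries_def K_def[symmetric]
    by (simp add: sum_list_sort_eq interv_sum_list_conv_sum_set_nat atLeast0LessThan q_def)
  also have "\<dots> = coord_sum (Suc K) z - (real b - 1) * q"
  proof -
    have "(\<Sum>i<K. z i) = (\<Sum>i<a. z i) + (\<Sum>i=a..<K. z i)"
      using K(2) by (metis atLeast0LessThan sum.atLeastLessThan_concat zero_le)
    then show ?thesis
      using K ab unfolding coord_sum_def by (simp add: sum_subtractf of_nat_diff algebra_simps)
  qed
  finally have "sum_list ys = coord_sum (Suc K) z - (real b - 1) * q" .
  then show "coord_sum (a+b-1) (S_map a b z) = (coord_sum (a+b-1) z - (real b - 1) * q) / (1 - q)"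
    unfolding coord_sum_def S K(1) using len
    by (simp add: sum_divide_distrib[symmetric] sum_list_sum_nth atLeast0LessThan)
  have "S_map a b z \<in> Lam (Suc K)"
    unfolding Lam_def S using sorted nonneg len q1
    by (auto intro!: divide_right_mono sorted_nth_mono divide_nonneg_pos)
  moreover have "S_map a b z K \<le> 1"
    unfolding S using len q1 by (simp add: ys_def nth_append)
  ultimately show "S_map a b z \<in> B_set a b"
    unfolding B_set_def K(1) K_def by simp
qed

definition D_set :: "nat \<Rightarrow> nat \<Rightarrow> (nat \<Rightarrow> real) set" where
  "D_set a b = {z \<in> B_set a b. coord_sum (a+b-1) z < 1 \<and> coord_sum (a+b-1) z < 2 * z (a+b-2)}"

text \<open>sign_form a b z = (\<beta> - s) - 4 (\<beta> t - s) in the notation of the header.\<close>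

definition sign_form :: "nat \<Rightarrow> nat \<Rightarrow> (nat \<Rightarrow> real) \<Rightarrow> real" where
  "sign_form a b z = (real b - 1) * (1 - 4 * z (a+b-2)) + 3 * coord_sum (a+b-1) z"

lemma S_map_D_set:
  assumes ab: "a \<ge> 1" "b \<ge> 3" and z: "z \<in> D_set a b"
  shows "S_map a b z \<in> D_set a b"
    and "sign_form a b (S_map a b z) = sign_form a b z / (1 - z (a - 1))"
    and "z (a - 1) < 1"
proof -
  define s q t where "s = coord_sum (a+b-1) z" and "q = z (a - 1)" and "t = z (a+b-2)"
  have zB: "z \<in> B_set a b" and s: "s < 1" "s < 2 * t"
    using z unfolding D_set_def s_def t_def by auto
  have zLam: "z \<in> Lam (a + b - 1)" and t1: "t \<le> 1"
    using zB unfolding B_set_def t_def by auto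
  have "a - 1 \<notin> {a, a+b-2}" "a \<noteq> a+b-2" using ab by auto
  then have "z (a - 1) + z a + t = sum z {a - 1, a, a+b-2}"
    unfolding t_def by simp
  also have "\<dots> \<le> s"
    unfolding s_def coord_sum_def using ab Lam_nonneg[OF zLam]
    by (intro sum_mono2) auto
  finally have "q + z a + t \<le> s" unfolding q_def .
  moreover have "q \<le> z a" unfolding q_def using Lam_mono[OF zLam] ab by simp
  ultimately have q: "2 * q < t" using s by linarith
  have q0: "0 \<le> q" unfolding q_def using Lam_nonneg[OF zLam] ab by simp
  show q1: "z (a - 1) < 1" using q q0 t1 unfolding q_def by linarith
  have b2: "real b - 1 \<ge> 2" using ab by simp
  have "b \<ge> 2" using ab by simp
  note S = S_map_rescaled[OF ab(1) this zB, folded s_def q_def t_def, OF less_imp_le[OF q]]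
  have c: "0 < 1 - q" using q1 unfolding q_def by simp
  have "2 * q \<le> (real b - 1) * q" using mult_right_mono[OF b2 q0] .
  then have "s - (real b - 1) * q < 1 - q" "s - (real b - 1) * q < 2 * (t - q)"
    using s q0 by (simp_all add: algebra_simps)
  then have "(s - (real b - 1) * q) / (1 - q) < 1"
    "(s - (real b - 1) * q) / (1 - q) < 2 * ((t - q) / (1 - q))"
    using c divide_strict_right_mono[of _ "2 * (t - q)" "1 - q"] by (simp_all add: pos_divide_less_eq)
  then show "S_map a b z \<in> D_set a b" using S unfolding D_set_def by simp
  have "coord_sum (a+b-1) (S_map a b z) * (1 - q) = s - (real b - 1) * q"
    "S_map a b z (a+b-2) * (1 - q) = t - q"
    using S c by simp_all
  then have "sign_form a b (S_map a b z) * (1 - q) = sign_form a b z"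
    unfolding sign_form_def s_def[symmetric] t_def[symmetric] by algebra
  then show "sign_form a b (S_map a b z) = sign_form a b z / (1 - z (a - 1))"
    using c unfolding q_def by (simp add: eq_divide_eq)
qed

definition sign_region :: "nat \<Rightarrow> nat \<Rightarrow> real \<Rightarrow> (nat \<Rightarrow> real) set" where
  "sign_region a b \<sigma> = {z \<in> D_set a b. sgn (sign_form a b z) = \<sigma>}"

lemma S_map_image_sign_region:
  assumes "a \<ge> 1" "b \<ge> 3"
  shows "S_map a b ` sign_region a b \<sigma> \<subseteq> sign_region a b \<sigma>"
  using S_map_D_set[OF assms] by (auto simp: sign_region_def sgn_divide)

lemma sets_sign_region: "sign_region a b \<sigma> \<in> sets (Pi\<^sub>M {..<a+b-1} (\<lambda>_. lborel))"
proof -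
  let ?P = "Pi\<^sub>M {..<a+b-1} (\<lambda>_. lborel :: real measure)"
  have coord_sum: "coord_sum n \<in> borel_measurable ?P" for n
    unfolding coord_sum_def[abs_def] by (intro borel_measurable_sum borel_measurable_component)
  have sign_form: "(\<lambda>z. sgn (sign_form a b z)) \<in> borel_measurable ?P"
    unfolding sign_form_def using coord_sum
    by (intro measurable_compose[OF _ borel_measurable_sgn] borel_measurable_add
        borel_measurable_times borel_measurable_diff borel_measurable_const borel_measurable_component)
  have "sign_region a b \<sigma> = B_set a b \<inter> {z \<in> space ?P. coord_sum (a+b-1) z < 1}
      \<inter> {z \<in> space ?P. coord_sum (a+b-1) z < 2 * z (a+b-2)}
      \<inter> {z \<in> space ?P. sgn (sign_form a b z) = \<sigma>}"
    using sets.sets_into_space[OF sets_B_set] unfolding sign_region_def D_set_def by auto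
  also have "\<dots> \<in> sets ?P"
    using coord_sum sign_form
    by (intro sets.Int sets_B_set borel_measurable_less borel_measurable_eq
        borel_measurable_const borel_measurable_times borel_measurable_component)
  finally show ?thesis .
qed

text \<open>The first K coordinates lie in consecutive intervals of length 1/(100 K^2), so they increase
  and sum to at most 1/100; the sign of sign_form is then decided by the last coordinate alone.\<close>

definition probe_box :: "nat \<Rightarrow> real \<Rightarrow> real \<Rightarrow> (nat \<Rightarrow> real) set" where
  "probe_box K lo hi = PiE {..<Suc K} (\<lambda>i. if i < K
     then {real i / (100 * real K ^ 2) .. real (Suc i) / (100 * real K ^ 2)} else {lo..hi})"

lemma probe_box_coords:
  assumes z: "z \<in> probe_box K lo hi" and lo: "1/100 \<le> lo"
  shows "z \<in> Lam (Suc K)" "lo \<le> z K" "z K \<le> hi" "0 \<le> (\<Sum>i<K. z i)" "(\<Sum>i<K. z i) \<le> 1/100"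
proof -
  define d where "d = 1 / (100 * real K ^ 2)"
  have zi: "real i * d \<le> z i" "z i \<le> real (Suc i) * d" if "i < K" for i
    using PiE_mem[OF z[unfolded probe_box_def], of i] that unfolding d_def by auto
  show zK: "lo \<le> z K" "z K \<le> hi" using PiE_mem[OF z[unfolded probe_box_def], of K] by auto
  have d: "0 \<le> d" "real K * (real K * d) \<le> 1/100"
    unfolding d_def by (auto simp: power2_eq_square)
  have upper: "z i \<le> real K * d" if "i < K" for i
    using zi(2)[OF that] mult_right_mono[of "real (Suc i)" "real K" d] that d by simp
  have nonneg: "0 \<le> z i" if "i < K" for i
    using zi(1)[OF that] d by (meson mult_nonneg_nonneg of_nat_0_le_iff order_trans)
  show "0 \<le> (\<Sum>i<K. z i)" using nonneg by (auto intro: sum_nonneg)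
  have "(\<Sum>i<K. z i) \<le> (\<Sum>i<K. real K * d)" using upper by (intro sum_mono) simp
  also have "\<dots> \<le> 1/100" using d by simp
  finally show "(\<Sum>i<K. z i) \<le> 1/100" .
  have "real K * d \<le> 1/100"
  proof (cases "K = 0")
    case False
    then have "1 * (real K * d) \<le> real K * (real K * d)"
      using d by (intro mult_right_mono) auto
    then show ?thesis using d by linarith
  qed (simp add: d_def)
  then have "z i \<le> z (Suc i)" if "Suc i \<le> K" for i
    using that zi[of i] zi[of "Suc i"] upper[of i] zK lo by (cases "Suc i = K") auto
  moreover have "0 \<le> z 0" using nonneg zK lo by (cases "K = 0") auto
  moreover have "z \<in> PiE {..<Suc K} (\<lambda>_. UNIV)"
    using z unfolding probe_box_def by (auto simp: PiE_iff)
  ultimately show "z \<in> Lam (Suc K)" unfolding Lam_def by auto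
qed

lemma emeasure_probe_box:
  assumes "lo < hi"
  shows "emeasure (Pi\<^sub>M {..<Suc K} (\<lambda>_. lborel)) (probe_box K lo hi) \<noteq> 0"
proof -
  interpret product_sigma_finite "\<lambda>_::nat. lborel::real measure"
    by (simp add: product_sigma_finite_def lborel.sigma_finite_measure_axioms)
  define I where "I i = (if i < K
     then {real i / (100 * real K ^ 2) .. real (Suc i) / (100 * real K ^ 2)} else {lo..hi})" for i
  have "emeasure lborel (I i) \<noteq> 0" for i
  proof (cases "i < K")
    case True
    then have "real i / (100 * real K ^ 2) < real (Suc i) / (100 * real K ^ 2)"
      by (intro divide_strict_right_mono) auto
    then show ?thesis using True by (simp add: I_def)
  qed (use assms in \<open>simp add: I_def\<close>)
  moreover have "emeasure (Pi\<^sub>M {..<Suc K} (\<lambda>_. lborel)) (probe_box K lo hi)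
      = (\<Prod>i<Suc K. emeasure lborel (I i))"
    unfolding probe_box_def I_def[symmetric] by (rule emeasure_PiM) (auto simp: I_def)
  ultimately show ?thesis by (simp add: prod_zero_iff)
qed

lemma probe_box_subset_sign_region:
  assumes ab: "a \<ge> 1" "b \<ge> 3" and box: "1/8 \<le> lo" "hi \<le> 3/4"
    and sign: "\<And>t e. t \<in> {lo..hi} \<Longrightarrow> e \<in> {0..1/100} \<Longrightarrow>
      sgn ((real b - 7/4) * (1 - 4 * t) + 3/4 + 3 * e) = \<sigma>"
  shows "probe_box (a+b-2) lo hi \<subseteq> sign_region a b \<sigma>"
proof
  fix z assume z: "z \<in> probe_box (a+b-2) lo hi"
  define K where "K = a + b - 2"
  have K: "a + b - 1 = Suc K" using ab unfolding K_def by simp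
  have "1/100 \<le> lo" using box(1) by simp
  note box_coords = probe_box_coords[OF z[folded K_def] this]
  have coord_sum_eq: "coord_sum (Suc K) z = (\<Sum>i<K. z i) + z K"
    unfolding coord_sum_def by simp
  have "z \<in> B_set a b"
    using box_coords box unfolding B_set_def K K_def[symmetric] by auto
  moreover have "coord_sum (a+b-1) z < 1" "coord_sum (a+b-1) z < 2 * z (a+b-2)"
    using box_coords box unfolding K coord_sum_eq K_def[symmetric] by auto
  moreover have "sign_form a b z = (real b - 7/4) * (1 - 4 * z K) + 3/4 + 3 * (\<Sum>i<K. z i)"
    unfolding sign_form_def K coord_sum_eq K_def[symmetric] by (simp add: field_simps)
  ultimately show "z \<in> sign_region a b \<sigma>"
    using sign box_coords unfolding sign_region_def D_set_def by auto
qed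

lemma emeasure_sign_region_nonzero:
  assumes ab: "a \<ge> 1" "b \<ge> 3" and \<sigma>: "\<sigma> = -1 \<or> \<sigma> = 1"
  shows "emeasure (Pi\<^sub>M {..<a+b-1} (\<lambda>_. lborel)) (sign_region a b \<sigma>) \<noteq> 0"
proof -
  define lo hi :: real where "lo = (if \<sigma> = 1 then 1/8 else 1/2)" and "hi = (if \<sigma> = 1 then 1/4 else 3/4)"
  have c: "real b - 7/4 \<ge> 5/4" using ab by simp
  have "sgn ((real b - 7/4) * (1 - 4 * t) + 3/4 + 3 * e) = \<sigma>"
    if "t \<in> {lo..hi}" "e \<in> {0..1/100}" for t e
  proof (cases "\<sigma> = 1")
    case True
    then have "0 \<le> (real b - 7/4) * (1 - 4 * t)" using that c unfolding lo_def hi_def by simp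
    then show ?thesis using True that by (simp add: sgn_real_def)
  next
    case False
    then have "(real b - 7/4) * (1 - 4 * t) \<le> (real b - 7/4) * (-1)"
      using that c unfolding lo_def hi_def by (intro mult_left_mono) auto
    then show ?thesis using False \<sigma> that c by (simp add: sgn_real_def)
  qed
  then have "probe_box (a+b-2) lo hi \<subseteq> sign_region a b \<sigma>"
    using ab by (intro probe_box_subset_sign_region) (auto simp: lo_def hi_def)
  moreover have "emeasure (Pi\<^sub>M {..<a+b-1} (\<lambda>_. lborel)) (probe_box (a+b-2) lo hi) \<noteq> 0"
  proof -
    have "lo < hi" "Suc (a+b-2) = a+b-1" using ab unfolding lo_def hi_def by auto
    then show ?thesis using emeasure_probe_box[of lo hi "a+b-2"] by simp
  qed
  ultimately show ?thesis
    using sets_sign_region emeasure_mono[of "probe_box (a+b-2) lo hi" "sign_region a b \<sigma>"]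
    by (metis le_zero_eq)
qed

theorem theorem1p4:
  fixes a b :: nat
  assumes "a \<ge> 1" and "b \<ge> 3"
  shows "\<not> ergodic_map (lebesgue_n (a + b - 1)) (B_set a b) (S_map a b)"
proof -
  have "sign_region a b (-1) \<subseteq> B_set a b" "sign_region a b 1 \<subseteq> B_set a b"
    unfolding sign_region_def D_set_def by auto
  moreover have "sign_region a b 1 \<inter> sign_region a b (-1) = {}"
    unfolding sign_region_def by auto
  ultimately have "\<not> ergodic_map (Pi\<^sub>M {..<a+b-1} (\<lambda>_. lborel)) (B_set a b) (S_map a b)"
    using measurable_S_map sets_B_set sets_sign_region S_map_image_sign_region[OF assms]
      emeasure_sign_region_nonzero[OF assms]
    by (intro not_ergodic_map_if_disjoint_forward_invariant[of _ _ _ "sign_region a b (-1)"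
          "sign_region a b 1"]) auto
  then show ?thesis
    using ergodic_map_completionD[OF sets_B_set] unfolding lebesgue_n_def by blast
qed

end
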